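(* Let $A$ be a vector space with bilinear operations $\star,\circ$; $x\cdot y=x\star y+y\star x$, $[x,y]=x\circ y-y\circ x$. (1) If $(A,\cdot,[-,-])$ is a transposed Poisson algebra, $(A,\star)$ is Zinbiel, $(A,\circ)$ is pre-Lie, and $(-\mathcal{L}^*_{\star},\mathcal{L}^*_{\circ},A^* )$ is a representation of $(A,\cdot,[-,-])$, then $(A,\star,\circ)$ is a TZPD algebra. (2) Conversely, if $(A,\star,\circ)$ is a TZPD algebra then $(A,\cdot,[-,-])$ is a transposed Poisson algebra with representation $(-\mathcal{L}^*_{\star},\mathcal{L}^*_{\circ},A^* )$.
   Context: Finite-dimensional spaces, characteristic zero. $\mathcal{L}_\ast(x)y=x\ast y$; for linear $\rho:A\to\mathrm{End}(V)$, $\langle\rho^*(x)v^*,u\rangle=-\langle v^*,\rho(x)u\rangle$. Zinbiel: $x\star(y\star z)=(x\star y)\star z+(y\star x)\star z$. Pre-Lie: $(x\circ y)\circ z-x\circ(y\circ z)=(y\circ x)\circ z-y\circ(x\circ z)$. Transposed Poisson algebra: $(A,\cdot)$ commutative associative, $(A,[-,-])$ Lie, $2z\cdot[x,y]=[z\cdot x,y]+[x,z\cdot y]$. A representation of a transposed Poisson algebra is $(\mu,\rho,V)$ with $\mu(x\cdot y)=\mu(x)\mu(y)$, $\rho([x,y])=[\rho(x),\rho(y)]$, $2\mu(x)\rho(y)=\rho(x\cdot y)+\rho(y)\mu(x)$, $2\mu([x,y])=\rho(x)\mu(y)-\rho(y)\mu(x)$. A TZPD algebra is $(A,\star,\circ)$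 with $(A,\star)$ Zinbiel, $(A,\circ)$ pre-Lie, and for all $x,y,z$: $2y\circ(x\star z)=(x\star y+y\star x)\circ z+x\star(y\circ z)$; $2(x\circ y-y\circ x)\star z=x\star(y\circ z)-y\star(x\circ z)$; $y\circ(x\star z+z\star x)-x\circ(y\star z+z\star y)+z\star(x\circ y-y\circ x)=0$. *)

theory Defs
  imports Main "HOL.Vector_Spaces" "HOL-Library.Function_Algebras"
begin

definition bilinear_op :: "('k::field \<Rightarrow> 'v::ab_group_add \<Rightarrow> 'v) \<Rightarrow> ('v \<Rightarrow> 'v \<Rightarrow> 'v) \<Rightarrow> bool" where
  "bilinear_op sc m \<longleftrightarrow>
     (\<forall>y. Vector_Spaces.linear sc sc (\<lambda>x. m x y)) \<and> (\<forall>x. Vector_Spaces.linear sc sc (m x))"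

definition zinbiel :: "('v::ab_group_add \<Rightarrow> 'v \<Rightarrow> 'v) \<Rightarrow> bool" where
  "zinbiel st \<longleftrightarrow> (\<forall>x y z. st x (st y z) = st (st x y) z + st (st y x) z)"

definition pre_lie :: "('v::ab_group_add \<Rightarrow> 'v \<Rightarrow> 'v) \<Rightarrow> bool" where
  "pre_lie ci \<longleftrightarrow> (\<forall>x y z. ci (ci x y) z - ci x (ci y z) = ci (ci y x) z - ci y (ci x z))"

definition transposed_poisson :: "('k::field \<Rightarrow> 'v::ab_group_add \<Rightarrow> 'v) \<Rightarrow> ('v \<Rightarrow> 'v \<Rightarrow> 'v) \<Rightarrow> ('v \<Rightarrow> 'v \<Rightarrow> 'v) \<Rightarrow> bool" where
  "transposed_poisson sc mul br \<longleftrightarrow>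
     bilinear_op sc mul \<and> bilinear_op sc br \<and>
     (\<forall>x y. mul x y = mul y x) \<and>
     (\<forall>x y z. mul (mul x y) z = mul x (mul y z)) \<and>
     (\<forall>x. br x x = 0) \<and>
     (\<forall>x y z. br x (br y z) + br y (br z x) + br z (br x y) = 0) \<and>
     (\<forall>x y z. mul z (br x y) + mul z (br x y) = br (mul z x) y + br x (mul z y))"

definition tp_rep :: "('k::field \<Rightarrow> 'v::ab_group_add \<Rightarrow> 'v) \<Rightarrow> ('v \<Rightarrow> 'v \<Rightarrow> 'v) \<Rightarrow> ('v \<Rightarrow> 'v \<Rightarrow> 'v)
     \<Rightarrow> ('k \<Rightarrow> 'w::ab_group_add \<Rightarrow> 'w) \<Rightarrow> 'w set \<Rightarrow> ('v \<Rightarrow> 'w \<Rightarrow> 'w) \<Rightarrow> ('v \<Rightarrow> 'w \<Rightarrow> 'w) \<Rightarrow> bool" where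
  "tp_rep sc mul br scV V mu rho \<longleftrightarrow>
     (\<forall>x. \<forall>v\<in>V. mu x v \<in> V \<and> rho x v \<in> V) \<and>
     (\<forall>x. \<forall>v\<in>V. \<forall>w\<in>V. \<forall>a b.
         mu x (scV a v + scV b w) = scV a (mu x v) + scV b (mu x w) \<and>
         rho x (scV a v + scV b w) = scV a (rho x v) + scV b (rho x w)) \<and>
     (\<forall>x y. \<forall>v\<in>V. \<forall>a b.
         mu (sc a x + sc b y) v = scV a (mu x v) + scV b (mu y v) \<and>
         rho (sc a x + sc b y) v = scV a (rho x v) + scV b (rho y v)) \<and>
     (\<forall>x y. \<forall>v\<in>V. mu (mul x y) v = mu x (mu y v)) \<and>
     (\<forall>x y. \<forall>v\<in>V. rho (br x y) v = rho x (rho y v) - rho y (rho x v)) \<and>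
     (\<forall>x y. \<forall>v\<in>V. mu x (rho y v) + mu x (rho y v) = rho (mul x y) v + rho y (mu x v)) \<and>
     (\<forall>x y. \<forall>v\<in>V. mu (br x y) v + mu (br x y) v = rho x (mu y v) - rho y (mu x v))"

definition dual_space :: "('k::field \<Rightarrow> 'v::ab_group_add \<Rightarrow> 'v) \<Rightarrow> ('v \<Rightarrow> 'k) set" where
  "dual_space sc = {f. Vector_Spaces.linear sc (*) f}"

definition dual_scale :: "'k::field \<Rightarrow> ('v \<Rightarrow> 'k) \<Rightarrow> ('v \<Rightarrow> 'k)" where
  "dual_scale c f = (\<lambda>u. c * f u)"

definition dual_op :: "('v \<Rightarrow> 'v \<Rightarrow> 'v) \<Rightarrow> 'v \<Rightarrow> ('v \<Rightarrow> 'k::field) \<Rightarrow> ('v \<Rightarrow> 'k)" where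
  "dual_op rho x f = (\<lambda>u. - f (rho x u))"

definition tzpd :: "('v::ab_group_add \<Rightarrow> 'v \<Rightarrow> 'v) \<Rightarrow> ('v \<Rightarrow> 'v \<Rightarrow> 'v) \<Rightarrow> bool" where
  "tzpd st ci \<longleftrightarrow> zinbiel st \<and> pre_lie ci \<and>
     (\<forall>x y z. ci y (st x z) + ci y (st x z) = ci (st x y + st y x) z + st x (ci y z)) \<and>
     (\<forall>x y z. st (ci x y - ci y x) z + st (ci x y - ci y x) z = st x (ci y z) - st y (ci x z)) \<and>
     (\<forall>x y z. ci y (st x z + st z x) - ci x (st y z + st z y) + st z (ci x y - ci y x) = 0)"

end

theory Submission
  imports Defs
begin

text \<open>
  Linear functionals separate the points of any vector space, so each of the four identities
  required of \<open>(-\<L>\<^sup>*\<^sub>\<star>, \<L>\<^sup>*\<^sub>\<circ>)\<close> on \<open>A\<^sup>*\<close> is equivalent to a trilinear identity in \<open>A\<close>: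
  the Zinbiel identity, the pre-Lie identity and the first two TZPD identities. The Zinbiel
  identity makes \<open>x\<cdot>y = x\<star>y + y\<star>x\<close> commutative and associative, the pre-Lie identity makes the
  commutator a Lie bracket, and the transposed Poisson compatibility expands into a combination of
  the TZPD identities in which the third one occurs with coefficient 3. In characteristic 0 it is
  therefore equivalent to the third TZPD identity once the other two hold.
\<close>

lemma vector_space_field: "vector_space ((*) :: 'k::field \<Rightarrow> 'k \<Rightarrow> 'k)"
  by unfold_locales (auto simp: algebra_simps)

lemma fun_eq_iff_pointwise_diff: "g = h \<longleftrightarrow> (\<forall>u. h u - g u = 0)"
  for g h :: "'a \<Rightarrow> 'b::ab_group_add"
  by (auto simp: fun_eq_iff)

lemma dual_op_apply [simp]: "dual_op m x f u = - f (m x u)"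
  by (simp add: dual_op_def)

lemma dual_space_distribs:
  assumes "f \<in> dual_space sc"
  shows "f (a + b) = f a + f b" "f (a - b) = f a - f b" "f (- a) = - f a" "f 0 = 0"
    "f (sc r a) = r * f a"
  using assms module_hom.add module_hom.diff module_hom.neg module_hom.zero module_hom.scale
  unfolding dual_space_def linear_iff_module_hom by fastforce+

lemma bilinear_op_distribs:
  assumes "bilinear_op sc m"
  shows "m (a + b) c = m a c + m b c" "m c (a + b) = m c a + m c b"
    "m (a - b) c = m a c - m b c" "m c (a - b) = m c a - m c b"
    "m (- a) c = - m a c" "m c (- a) = - m c a"
    "m (sc r a) c = sc r (m a c)" "m c (sc r a) = sc r (m c a)"
  using assms module_hom.add[of sc sc "\<lambda>x. m x c"] module_hom.add[of sc sc "m c"]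
    module_hom.diff[of sc sc "\<lambda>x. m x c"] module_hom.diff[of sc sc "m c"]
    module_hom.neg[of sc sc "\<lambda>x. m x c"] module_hom.neg[of sc sc "m c"]
    module_hom.scale[of sc sc "\<lambda>x. m x c"] module_hom.scale[of sc sc "m c"]
  unfolding bilinear_op_def linear_iff_module_hom by auto

context vector_space
begin

lemma dual_space_separates:
  assumes "v \<noteq> 0"
  obtains f where "f \<in> dual_space scale" "f v = 1"
proof -
  interpret pair: vector_space_pair scale "(*) :: 'a \<Rightarrow> 'a \<Rightarrow> 'a"
    by (simp add: vector_space_pair_def vector_space_axioms vector_space_field)
  have "independent {v}"
    using assms by (simp add: independent_insertI)
  then show thesis
    by (intro that[of "pair.construct {v} (\<lambda>_. 1)"])
      (simp_all add: dual_space_def pair.linear_construct pair.construct_basis)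
qed

lemma dual_space_annihilator_eq_zero: "(\<forall>f\<in>dual_space scale. f v = 0) \<longleftrightarrow> v = 0"
  by (metis dual_space_separates dual_space_distribs(4) one_neq_zero)

end

lemma vector_space_triple_eq_zero:
  fixes sc :: "'k::field_char_0 \<Rightarrow> 'v::ab_group_add \<Rightarrow> 'v"
    and w :: 'v
  assumes "vector_space sc" and "w + w + w = 0"
  shows "w = 0"
proof -
  interpret vector_space sc by fact
  have "sc (1 + 1 + 1) w = w + w + w"
    by (simp only: scale_left_distrib scale_one)
  then have "sc 3 w = 0"
    using assms(2) by (simp add: numeral_3_eq_3)
  then show ?thesis
    by simp
qed

locale bilinear_pair = vector_space sc
  for sc :: "'k::field \<Rightarrow> 'v::ab_group_add \<Rightarrow> 'v" +
  fixes st ci :: "'v \<Rightarrow> 'v \<Rightarrow> 'v"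
  assumes bilinear_st: "bilinear_op sc st" and bilinear_ci: "bilinear_op sc ci"
begin

lemmas distribs [simp] = bilinear_op_distribs[OF bilinear_st] bilinear_op_distribs[OF bilinear_ci]

abbreviation dot :: "'v \<Rightarrow> 'v \<Rightarrow> 'v" where "dot x y \<equiv> st x y + st y x"
abbreviation bracket :: "'v \<Rightarrow> 'v \<Rightarrow> 'v" where "bracket x y \<equiv> ci x y - ci y x"

definition zinbiel_defect :: "'v \<Rightarrow> 'v \<Rightarrow> 'v \<Rightarrow> 'v" where
  "zinbiel_defect x y z = st x (st y z) - (st (st x y) z + st (st y x) z)"

definition pre_lie_defect :: "'v \<Rightarrow> 'v \<Rightarrow> 'v \<Rightarrow> 'v" where
  "pre_lie_defect x y z = ci (ci x y) z - ci x (ci y z) - ci (ci y x) z + ci y (ci x z)"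

definition tzpd_defect1 :: "'v \<Rightarrow> 'v \<Rightarrow> 'v \<Rightarrow> 'v" where
  "tzpd_defect1 x y z = ci y (st x z) + ci y (st x z) - ci (dot x y) z - st x (ci y z)"

definition tzpd_defect2 :: "'v \<Rightarrow> 'v \<Rightarrow> 'v \<Rightarrow> 'v" where
  "tzpd_defect2 x y z = st (bracket x y) z + st (bracket x y) z - st x (ci y z) + st y (ci x z)"

definition tzpd_defect3 :: "'v \<Rightarrow> 'v \<Rightarrow> 'v \<Rightarrow> 'v" where
  "tzpd_defect3 x y z = ci y (dot x z) - ci x (dot y z) + st z (bracket x y)"

definition tp_defect :: "'v \<Rightarrow> 'v \<Rightarrow> 'v \<Rightarrow> 'v" where
  "tp_defect x y z = dot z (bracket x y) + dot z (bracket x y) - (bracket (dot z x) y + bracket x (dot z y))"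

lemma zinbiel_iff_defect: "zinbiel st \<longleftrightarrow> (\<forall>x y z. zinbiel_defect x y z = 0)"
  by (simp add: zinbiel_def zinbiel_defect_def)

lemma pre_lie_iff_defect: "pre_lie ci \<longleftrightarrow> (\<forall>x y z. pre_lie_defect x y z = 0)"
  by (simp add: pre_lie_def pre_lie_defect_def algebra_simps)

lemma tzpd_iff_defects:
  "tzpd st ci \<longleftrightarrow> zinbiel st \<and> pre_lie ci \<and> (\<forall>x y z. tzpd_defect1 x y z = 0)
     \<and> (\<forall>x y z. tzpd_defect2 x y z = 0) \<and> (\<forall>x y z. tzpd_defect3 x y z = 0)"
  by (simp add: tzpd_def tzpd_defect1_def tzpd_defect2_def tzpd_defect3_def algebra_simps)

lemma transposed_poisson_iff_defects:
  "transposed_poisson sc dot bracket \<longleftrightarrow>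
     (\<forall>x y z. dot (dot x y) z = dot x (dot y z)) \<and>
     (\<forall>x y z. bracket x (bracket y z) + bracket y (bracket z x) + bracket z (bracket x y) = 0) \<and>
     (\<forall>x y z. tp_defect x y z = 0)"
proof -
  have "bilinear_op sc dot" "bilinear_op sc bracket"
    unfolding bilinear_op_def linear_iff
    by (auto simp: vector_space_axioms algebra_simps)
  then show ?thesis
    by (simp add: transposed_poisson_def tp_defect_def add.commute)
qed

lemma dot_assoc_defect:
  "dot (dot x y) z - dot x (dot y z) =
     zinbiel_defect z x y + zinbiel_defect z y x - zinbiel_defect x y z - zinbiel_defect x z y"
  by (simp add: zinbiel_defect_def algebra_simps)

lemma bracket_jacobi_defect:
  "bracket x (bracket y z) + bracket y (bracket z x) + bracket z (bracket x y) =
     pre_lie_defect x z y - pre_lie_defect x y z - pre_lie_defect y z x"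
  by (simp add: pre_lie_defect_def algebra_simps)

lemma tp_defect_eq_tzpd_defects:
  "tp_defect x y z =
     tzpd_defect1 y x z + tzpd_defect1 z x y - tzpd_defect1 x y z - tzpd_defect1 z y x
     + tzpd_defect2 x y z + (tzpd_defect3 x y z + tzpd_defect3 x y z + tzpd_defect3 x y z)"
  by (simp add: tp_defect_def tzpd_defect1_def tzpd_defect2_def tzpd_defect3_def algebra_simps)

abbreviation mu :: "'v \<Rightarrow> ('v \<Rightarrow> 'k) \<Rightarrow> 'v \<Rightarrow> 'k" where "mu x f \<equiv> - dual_op st x f"
abbreviation rho :: "'v \<Rightarrow> ('v \<Rightarrow> 'k) \<Rightarrow> 'v \<Rightarrow> 'k" where "rho \<equiv> dual_op ci"

lemma dual_rep_closed:
  assumes f: "f \<in> dual_space sc"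
  shows "mu x f \<in> dual_space sc" "rho x f \<in> dual_space sc"
  by (auto simp: dual_space_def linear_iff vector_space_axioms vector_space_field
      dual_space_distribs[OF f])

lemma dual_rep_linear_right:
  "mu x (dual_scale a f + dual_scale b g) = dual_scale a (mu x f) + dual_scale b (mu x g)"
  "rho x (dual_scale a f + dual_scale b g) = dual_scale a (rho x f) + dual_scale b (rho x g)"
  by (simp_all add: fun_eq_iff dual_scale_def algebra_simps)

lemma dual_rep_linear_left:
  assumes f: "f \<in> dual_space sc"
  shows "mu (sc a x + sc b y) f = dual_scale a (mu x f) + dual_scale b (mu y f)"
    "rho (sc a x + sc b y) f = dual_scale a (rho x f) + dual_scale b (rho y f)"
  by (simp_all add: fun_eq_iff dual_scale_def dual_space_distribs[OF f] algebra_simps)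

lemma dual_mu_mult_iff:
  assumes f: "f \<in> dual_space sc"
  shows "mu (dot x y) f = mu x (mu y f) \<longleftrightarrow> (\<forall>u. f (zinbiel_defect y x u) = 0)"
  unfolding fun_eq_iff_pointwise_diff
  by (simp add: zinbiel_defect_def dual_space_distribs[OF f] algebra_simps)

lemma dual_rho_bracket_iff:
  assumes f: "f \<in> dual_space sc"
  shows "rho (bracket x y) f = rho x (rho y f) - rho y (rho x f) \<longleftrightarrow>
    (\<forall>u. f (pre_lie_defect x y u) = 0)"
  unfolding fun_eq_iff_pointwise_diff
  by (simp add: pre_lie_defect_def dual_space_distribs[OF f] algebra_simps)

lemma dual_mu_rho_iff:
  assumes f: "f \<in> dual_space sc"
  shows "mu x (rho y f) + mu x (rho y f) = rho (dot x y) f + rho y (mu x f) \<longleftrightarrow>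
    (\<forall>u. f (tzpd_defect1 x y u) = 0)"
  unfolding fun_eq_iff_pointwise_diff
  by (simp add: tzpd_defect1_def dual_space_distribs[OF f] algebra_simps)

lemma dual_mu_bracket_iff:
  assumes f: "f \<in> dual_space sc"
  shows "mu (bracket x y) f + mu (bracket x y) f = rho x (mu y f) - rho y (mu x f) \<longleftrightarrow>
    (\<forall>u. f (tzpd_defect2 x y u) = 0)"
  unfolding fun_eq_iff_pointwise_diff
  by (simp add: tzpd_defect2_def dual_space_distribs[OF f] algebra_simps) metis

lemma tp_rep_dual_iff:
  "tp_rep sc dot bracket dual_scale (dual_space sc) mu rho \<longleftrightarrow>
     zinbiel st \<and> pre_lie ci \<and>
     (\<forall>x y z. tzpd_defect1 x y z = 0) \<and> (\<forall>x y z. tzpd_defect2 x y z = 0)"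
proof -
  have annihilate: "(\<forall>x y. \<forall>f\<in>dual_space sc. \<forall>u. f (D x y u) = 0) \<longleftrightarrow> (\<forall>x y u. D x y u = 0)"
    for D :: "'v \<Rightarrow> 'v \<Rightarrow> 'v \<Rightarrow> 'v"
    using dual_space_annihilator_eq_zero by blast
  have mult: "(\<forall>x y. \<forall>f\<in>dual_space sc. mu (dot x y) f = mu x (mu y f)) \<longleftrightarrow>
      (\<forall>x y u. zinbiel_defect y x u = 0)"
    unfolding annihilate[symmetric] by (simp only: dual_mu_mult_iff cong: ball_cong)
  have bracket: "(\<forall>x y. \<forall>f\<in>dual_space sc. rho (bracket x y) f = rho x (rho y f) - rho y (rho x f))
      \<longleftrightarrow> (\<forall>x y u. pre_lie_defect x y u = 0)"
    unfolding annihilate[symmetric] by (simp only: dual_rho_bracket_iff cong: ball_cong)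
  have mu_rho: "(\<forall>x y. \<forall>f\<in>dual_space sc.
        mu x (rho y f) + mu x (rho y f) = rho (dot x y) f + rho y (mu x f))
      \<longleftrightarrow> (\<forall>x y u. tzpd_defect1 x y u = 0)"
    unfolding annihilate[symmetric] by (simp only: dual_mu_rho_iff cong: ball_cong)
  have mu_bracket: "(\<forall>x y. \<forall>f\<in>dual_space sc.
        mu (bracket x y) f + mu (bracket x y) f = rho x (mu y f) - rho y (mu x f))
      \<longleftrightarrow> (\<forall>x y u. tzpd_defect2 x y u = 0)"
    unfolding annihilate[symmetric] by (simp only: dual_mu_bracket_iff cong: ball_cong)
  show ?thesis
    unfolding tp_rep_def mult bracket mu_rho mu_bracket zinbiel_iff_defect pre_lie_iff_defect
    using dual_rep_closed dual_rep_linear_left dual_rep_linear_right by auto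
qed

lemma transposed_poisson_of_tzpd:
  assumes "tzpd st ci"
  shows "transposed_poisson sc dot bracket"
proof -
  have zinbiel: "zinbiel_defect x y z = 0" and pre_lie: "pre_lie_defect x y z = 0"
    and tzpd: "tzpd_defect1 x y z = 0" "tzpd_defect2 x y z = 0" "tzpd_defect3 x y z = 0" for x y z
    using assms by (simp_all add: tzpd_iff_defects zinbiel_iff_defect pre_lie_iff_defect)
  have "dot (dot x y) z = dot x (dot y z)" for x y z
    using dot_assoc_defect[of x y z] by (simp add: zinbiel)
  moreover have "bracket x (bracket y z) + bracket y (bracket z x) + bracket z (bracket x y) = 0" for x y z
    using bracket_jacobi_defect[of x y z] by (simp add: pre_lie)
  moreover have "tp_defect x y z = 0" for x y z
    using tp_defect_eq_tzpd_defects[of x y z] by (simp add: tzpd)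
  ultimately show ?thesis
    by (simp add: transposed_poisson_iff_defects)
qed

end

locale bilinear_pair_char_0 = bilinear_pair sc st ci
  for sc :: "'k::field_char_0 \<Rightarrow> 'v::ab_group_add \<Rightarrow> 'v" and st ci
begin

lemma tzpd_iff_transposed_poisson_dual_rep:
  "tzpd st ci \<longleftrightarrow>
     transposed_poisson sc dot bracket \<and> tp_rep sc dot bracket dual_scale (dual_space sc) mu rho"
proof
  assume "tzpd st ci"
  then show "transposed_poisson sc dot bracket \<and> tp_rep sc dot bracket dual_scale (dual_space sc) mu rho"
    using transposed_poisson_of_tzpd tp_rep_dual_iff tzpd_iff_defects by blast
next
  assume "transposed_poisson sc dot bracket \<and> tp_rep sc dot bracket dual_scale (dual_space sc) mu rho"
  then have tp: "tp_defect x y z = 0" and rep: "zinbiel st" "pre_lie ci"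
    and tzpd: "tzpd_defect1 x y z = 0" "tzpd_defect2 x y z = 0" for x y z
    unfolding transposed_poisson_iff_defects tp_rep_dual_iff by blast+
  have "tzpd_defect3 x y z + tzpd_defect3 x y z + tzpd_defect3 x y z = 0" for x y z
    using tp_defect_eq_tzpd_defects[of x y z] by (simp add: tp tzpd)
  then have "tzpd_defect3 x y z = 0" for x y z
    by (rule vector_space_triple_eq_zero[OF vector_space_axioms])
  then show "tzpd st ci"
    by (simp add: tzpd_iff_defects rep tzpd)
qed

end

theorem mainTheorem18:
  fixes sc :: "'k::field_char_0 \<Rightarrow> 'v::ab_group_add \<Rightarrow> 'v"
    and st ci :: "'v \<Rightarrow> 'v \<Rightarrow> 'v"
  assumes "vector_space sc"
    and "\<exists>B. finite_dimensional_vector_space sc B"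
    and "bilinear_op sc st" and "bilinear_op sc ci"
  shows "((transposed_poisson sc (\<lambda>x y. st x y + st y x) (\<lambda>x y. ci x y - ci y x)
           \<and> zinbiel st \<and> pre_lie ci
           \<and> tp_rep sc (\<lambda>x y. st x y + st y x) (\<lambda>x y. ci x y - ci y x)
                dual_scale (dual_space sc) (\<lambda>x f. - dual_op st x f) (dual_op ci)
         \<longrightarrow> tzpd st ci)
     \<and> (tzpd st ci
         \<longrightarrow> transposed_poisson sc (\<lambda>x y. st x y + st y x) (\<lambda>x y. ci x y - ci y x)
           \<and> tp_rep sc (\<lambda>x y. st x y + st y x) (\<lambda>x y. ci x y - ci y x)
                dual_scale (dual_space sc) (\<lambda>x f. - dual_op st x f) (dual_op ci)))"
proof -
  interpret bilinear_pair_char_0 sc st ci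
    using assms by (simp add: bilinear_pair_char_0_def bilinear_pair_def bilinear_pair_axioms_def)
  show ?thesis
    using tzpd_iff_transposed_poisson_dual_rep by blast
qed

end
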